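(* Let $A,Q,C_1,\dots,C_M,R_1,\dots,R_M$ be real scalars with $Q\ge0$ and $R_m>0$, and for $P\ge0$ define $f(P)=A^2P+Q$ and $g_m(P)=A^2P+Q-\frac{A^2C_m^2P^2}{C_m^2P+R_m}$, $m=1,\dots,M$. Let $\mathcal{F}$ be any function formed by composition (in any order) of any of the functions $f,g_1,\dots,g_M,\mathrm{id}$. Then: (i) $\mathcal{F}$ is either of the affine form $\mathcal{F}(P)=aP+b$ for some $a,b\ge0$, or of the linear fractional form $\mathcal{F}(P)=\frac{aP+b}{cP+d}$ for some $a,b,c,d\ge0$ with $ad-bc\ge0$; (ii) for each $m=1,\dots,M$, $P\mapsto\mathcal{F}(f(P))-\mathcal{F}(g_m(P))$ is an increasing function of $P\ge0$.
   Context: $\mathrm{id}$ denotes the identity function. Increasing means non-decreasing. *)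

theory Defs
  imports Complex_Main
begin

definition riccati_f :: "real \<Rightarrow> real \<Rightarrow> real \<Rightarrow> real" where
  "riccati_f A Q P = A^2 * P + Q"

definition riccati_g :: "real \<Rightarrow> real \<Rightarrow> real \<Rightarrow> real \<Rightarrow> real \<Rightarrow> real" where
  "riccati_g A Q Cm Rm P = A^2 * P + Q - (A^2 * Cm^2 * P^2) / (Cm^2 * P + Rm)"

inductive composed ::
  "real \<Rightarrow> real \<Rightarrow> (nat \<Rightarrow> real) \<Rightarrow> (nat \<Rightarrow> real) \<Rightarrow> nat \<Rightarrow> (real \<Rightarrow> real) \<Rightarrow> bool"
  for A Q C R M where
  comp_id: "composed A Q C R M id"
| comp_f: "composed A Q C R M F \<Longrightarrow> composed A Q C R M (riccati_f A Q \<circ> F)"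
| comp_g: "composed A Q C R M F \<Longrightarrow> m \<in> {1..M} \<Longrightarrow>
             composed A Q C R M (riccati_g A Q (C m) (R m) \<circ> F)"

end

theory Submission
  imports Defs
begin

text \<open>
  Every function involved is, on \<open>[0,\<infinity>)\<close>, a Moebius map \<open>P \<mapsto> (aP+b)/(cP+d)\<close> whose
  coefficient matrix has nonnegative entries, \<open>d > 0\<close> and nonnegative determinant; this class
  contains \<open>id\<close>, \<open>f\<close> and every \<open>g\<^sub>m\<close> and is closed under composition, since composition
  corresponds to the matrix product. For such a map
  \<open>F x - F y = (ad - bc)(x - y) / ((cx + d)(cy + d))\<close>, and with \<open>x = f P\<close>, \<open>y = g\<^sub>m P\<close> this
  becomes a nonnegative constant times \<open>P/(\<alpha>P + \<beta>) \<cdot> P/(\<gamma>P + \<delta>)\<close>, a product of two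
  nonnegative increasing functions.
\<close>

definition nonneg_moebius :: "(real \<Rightarrow> real) \<Rightarrow> bool" where
  "nonneg_moebius F \<longleftrightarrow> (\<exists>a b c d. a \<ge> 0 \<and> b \<ge> 0 \<and> c \<ge> 0 \<and> d > 0 \<and> a * d - b * c \<ge> 0 \<and>
     (\<forall>P\<ge>0. F P = (a * P + b) / (c * P + d)))"

lemma nonneg_moebiusI:
  assumes "a \<ge> 0" "b \<ge> 0" "c \<ge> 0" "d > 0" "a * d - b * c \<ge> 0"
    and "\<And>P. P \<ge> 0 \<Longrightarrow> F P = (a * P + b) / (c * P + d)"
  shows "nonneg_moebius F"
  unfolding nonneg_moebius_def using assms by blast

lemma affine_denominator_pos:
  fixes c d P :: real
  assumes "c \<ge> 0" "d > 0" "P \<ge> 0"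
  shows "c * P + d > 0"
  using assms by (simp add: add_nonneg_pos)

lemma nonneg_moebius_id: "nonneg_moebius id"
  by (rule nonneg_moebiusI[of 1 0 0 1]) simp_all

lemma nonneg_moebius_nonneg:
  assumes "nonneg_moebius F" "P \<ge> 0"
  shows "F P \<ge> 0"
  using assms affine_denominator_pos unfolding nonneg_moebius_def
  by (metis add_nonneg_nonneg divide_nonneg_pos mult_nonneg_nonneg)

lemma moebius_comp_eq:
  fixes a b c d a' b' c' d' N D :: real
  assumes "D > 0" "c' * N + d' * D \<noteq> 0"
  shows "(a' * (N / D) + b') / (c' * (N / D) + d') = (a' * N + b' * D) / (c' * N + d' * D)"
proof -
  have "a' * (N / D) + b' = (a' * N + b' * D) / D" "c' * (N / D) + d' = (c' * N + d' * D) / D"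
    using assms by (simp_all add: field_simps)
  then show ?thesis using assms by simp
qed

lemma nonneg_moebius_comp:
  assumes "nonneg_moebius G" "nonneg_moebius F"
  shows "nonneg_moebius (G \<circ> F)"
proof -
  obtain a' b' c' d' where G: "a' \<ge> 0" "b' \<ge> 0" "c' \<ge> 0" "d' > 0" "a' * d' - b' * c' \<ge> 0"
    "\<And>P. P \<ge> 0 \<Longrightarrow> G P = (a' * P + b') / (c' * P + d')"
    using assms(1) unfolding nonneg_moebius_def by blast
  obtain a b c d where F: "a \<ge> 0" "b \<ge> 0" "c \<ge> 0" "d > 0" "a * d - b * c \<ge> 0"
    "\<And>P. P \<ge> 0 \<Longrightarrow> F P = (a * P + b) / (c * P + d)"
    using assms(2) unfolding nonneg_moebius_def by blast
  have det: "(a' * a + b' * c) * (c' * b + d' * d) - (a' * b + b' * d) * (c' * a + d' * c)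
      = (a' * d' - b' * c') * (a * d - b * c)"
    by (simp add: algebra_simps)
  show ?thesis
  proof (rule nonneg_moebiusI[of "a' * a + b' * c" "a' * b + b' * d" "c' * a + d' * c" "c' * b + d' * d"])
    show "c' * b + d' * d > 0"
      using F G by (simp add: add_nonneg_pos)
    show "0 \<le> (a' * a + b' * c) * (c' * b + d' * d) - (a' * b + b' * d) * (c' * a + d' * c)"
      unfolding det using F G by simp
    fix P :: real assume P: "P \<ge> 0"
    have D: "c * P + d > 0" using F P by (simp add: affine_denominator_pos)
    have "c' * (a * P + b) + d' * (c * P + d) > 0"
      using F G P D by (simp add: add_nonneg_pos)
    then have "G (F P) = (a' * (a * P + b) + b' * (c * P + d)) / (c' * (a * P + b) + d' * (c * P + d))"
      using G(6)[OF nonneg_moebius_nonneg[OF assms(2) P]] F(6)[OF P] D moebius_comp_eq by simp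
    then show "(G \<circ> F) P = ((a' * a + b' * c) * P + (a' * b + b' * d)) / ((c' * a + d' * c) * P + (c' * b + d' * d))"
      by (simp add: algebra_simps)
  qed (use F G in simp_all)
qed

lemma nonneg_moebius_riccati_f: "Q \<ge> 0 \<Longrightarrow> nonneg_moebius (riccati_f A Q)"
  by (rule nonneg_moebiusI[of "A^2" Q 0 1]) (simp_all add: riccati_f_def)

lemma riccati_g_eq_moebius:
  assumes "R > 0" "P \<ge> 0"
  shows "riccati_g A Q C R P = ((A^2 * R + Q * C^2) * P + Q * R) / (C^2 * P + R)"
  using affine_denominator_pos[of "C^2" R P] assms
  unfolding riccati_g_def by (simp add: field_simps power2_eq_square)

lemma nonneg_moebius_riccati_g:
  assumes "Q \<ge> 0" "R > 0"
  shows "nonneg_moebius (riccati_g A Q C R)"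
proof (rule nonneg_moebiusI[of "A^2 * R + Q * C^2" "Q * R" "C^2" R])
  show "(A^2 * R + Q * C^2) * R - Q * R * C^2 \<ge> 0"
    using assms by (simp add: algebra_simps)
qed (use assms riccati_g_eq_moebius in auto)

lemma composed_nonneg_moebius:
  assumes "composed A Q C R M F" "Q \<ge> 0" "\<And>m. m \<in> {1..M} \<Longrightarrow> R m > 0"
  shows "nonneg_moebius F"
  using assms(1)
proof induction
  case comp_id
  show ?case by (rule nonneg_moebius_id)
next
  case (comp_f F)
  then show ?case using assms(2) by (intro nonneg_moebius_comp nonneg_moebius_riccati_f)
next
  case (comp_g F m)
  then show ?case using assms(2,3) by (intro nonneg_moebius_comp nonneg_moebius_riccati_g) auto
qed

lemma mono_on_div_affine:
  fixes \<alpha> \<beta> :: real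
  assumes "\<alpha> \<ge> 0" "\<beta> > 0"
  shows "mono_on {0..} (\<lambda>P. P / (\<alpha> * P + \<beta>))"
proof (rule mono_onI)
  fix P P' :: real assume "P \<in> {0..}" "P' \<in> {0..}" "P \<le> P'"
  moreover have "P * (\<alpha> * P' + \<beta>) \<le> P' * (\<alpha> * P + \<beta>)"
    using \<open>P \<le> P'\<close> assms by (simp add: algebra_simps)
  ultimately show "P / (\<alpha> * P + \<beta>) \<le> P' / (\<alpha> * P' + \<beta>)"
    using assms affine_denominator_pos[of \<alpha> \<beta>] by (simp add: divide_simps)
qed

lemma mono_on_mult_nonneg:
  fixes u v :: "real \<Rightarrow> real"
  assumes "mono_on S u" "mono_on S v" "\<And>x. x \<in> S \<Longrightarrow> u x \<ge> 0" "\<And>x. x \<in> S \<Longrightarrow> v x \<ge> 0"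
  shows "mono_on S (\<lambda>x. u x * v x)"
  using assms by (intro mono_onI mult_mono) (auto dest: mono_onD)

lemma moebius_diff:
  fixes a b c d x y :: real
  assumes "c * x + d \<noteq> 0" "c * y + d \<noteq> 0"
  shows "(a * x + b) / (c * x + d) - (a * y + b) / (c * y + d)
         = (a * d - b * c) * (x - y) / ((c * x + d) * (c * y + d))"
proof -
  have "(a * x + b) * (c * y + d) - (a * y + b) * (c * x + d) = (a * d - b * c) * (x - y)"
    by (simp add: algebra_simps)
  then show ?thesis using assms by (simp add: diff_frac_eq)
qed

lemma mono_on_moebius_riccati_gap:
  assumes "nonneg_moebius F" "Q \<ge> 0" "R > 0"
  shows "mono_on {0..} (\<lambda>P. F (riccati_f A Q P) - F (riccati_g A Q C R P))"
proof -
  obtain a b c d where F: "a \<ge> 0" "b \<ge> 0" "c \<ge> 0" "d > 0" "a * d - b * c \<ge> 0"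
    "\<And>P. P \<ge> 0 \<Longrightarrow> F P = (a * P + b) / (c * P + d)"
    using assms(1) unfolding nonneg_moebius_def by blast
  define \<alpha> where "\<alpha> = c * A^2"
  define \<beta> where "\<beta> = c * Q + d"
  define \<gamma> where "\<gamma> = \<alpha> * R + \<beta> * C^2"
  define \<delta> where "\<delta> = \<beta> * R"
  define K where "K = (a * d - b * c) * A^2 * C^2"
  have \<alpha>: "\<alpha> \<ge> 0" and \<beta>: "\<beta> > 0" and \<gamma>: "\<gamma> \<ge> 0" and \<delta>: "\<delta> > 0" and K: "K \<ge> 0"
    using F assms unfolding \<alpha>_def \<beta>_def \<gamma>_def \<delta>_def K_def by (simp_all add: add_nonneg_pos)
  have gap: "F (riccati_f A Q P) - F (riccati_g A Q C R P)
      = K * (P / (\<alpha> * P + \<beta>) * (P / (\<gamma> * P + \<delta>)))" if P: "P \<ge> 0" for P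
  proof -
    define x where "x = riccati_f A Q P"
    define y where "y = riccati_g A Q C R P"
    define D where "D = C^2 * P + R"
    have D: "D > 0" unfolding D_def using assms P affine_denominator_pos by simp
    have x0: "x \<ge> 0" and y0: "y \<ge> 0" unfolding x_def y_def
      using nonneg_moebius_nonneg P assms nonneg_moebius_riccati_f nonneg_moebius_riccati_g by auto
    have cx: "c * x + d = \<alpha> * P + \<beta>"
      unfolding x_def riccati_f_def \<alpha>_def \<beta>_def by (simp add: algebra_simps)
    have cy: "c * y + d = (\<gamma> * P + \<delta>) / D"
      unfolding y_def riccati_g_eq_moebius[OF assms(3) P] \<gamma>_def \<delta>_def \<alpha>_def \<beta>_def D_def
      using D unfolding D_def by (simp add: field_simps)
    have xy: "x - y = A^2 * C^2 * P^2 / D"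
      unfolding x_def y_def riccati_f_def riccati_g_def D_def
      using D unfolding D_def by (simp add: field_simps power2_eq_square)
    have "F x - F y = (a * d - b * c) * (x - y) / ((c * x + d) * (c * y + d))"
      using F(6) x0 y0 moebius_diff affine_denominator_pos[OF F(3,4)] by (metis less_numeral_extra(3))
    also have "\<dots> = K * (P / (\<alpha> * P + \<beta>) * (P / (\<gamma> * P + \<delta>)))"
      unfolding cx cy xy K_def
      using D affine_denominator_pos[OF \<alpha> \<beta> P] affine_denominator_pos[OF \<gamma> \<delta> P]
      by (simp add: power2_eq_square)
    finally show ?thesis unfolding x_def y_def .
  qed
  have "mono_on {0..} (\<lambda>P. K * (P / (\<alpha> * P + \<beta>) * (P / (\<gamma> * P + \<delta>))))"
    using K \<alpha> \<beta> \<gamma> \<delta> affine_denominator_pos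
    by (intro mono_on_mult_nonneg mono_on_div_affine mono_on_const)
       (auto simp: mono_on_def divide_nonneg_pos)
  then show ?thesis
    by (simp add: mono_on_def gap)
qed

theorem lemma5:
  fixes A Q :: real and C R :: "nat \<Rightarrow> real" and M :: nat and F :: "real \<Rightarrow> real"
  assumes "Q \<ge> 0"
    and "\<And>m. m \<in> {1..M} \<Longrightarrow> R m > 0"
    and "composed A Q C R M F"
  shows "((\<exists>a b. a \<ge> 0 \<and> b \<ge> 0 \<and> (\<forall>P\<ge>0. F P = a * P + b))
          \<or> (\<exists>a b c d. a \<ge> 0 \<and> b \<ge> 0 \<and> c \<ge> 0 \<and> d \<ge> 0 \<and> a * d - b * c \<ge> 0 \<and>
               (\<forall>P\<ge>0. c * P + d > 0 \<and> F P = (a * P + b) / (c * P + d))))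
        \<and> (\<forall>m \<in> {1..M}. mono_on {0..}
              (\<lambda>P. F (riccati_f A Q P) - F (riccati_g A Q (C m) (R m) P)))"
proof -
  have F: "nonneg_moebius F"
    using composed_nonneg_moebius assms by blast
  then obtain a b c d where "a \<ge> 0" "b \<ge> 0" "c \<ge> 0" "d > 0" "a * d - b * c \<ge> 0"
    "\<forall>P\<ge>0. F P = (a * P + b) / (c * P + d)"
    unfolding nonneg_moebius_def by blast
  then have "\<exists>a b c d. a \<ge> 0 \<and> b \<ge> 0 \<and> c \<ge> 0 \<and> d \<ge> 0 \<and> a * d - b * c \<ge> 0 \<and>
               (\<forall>P\<ge>0. c * P + d > 0 \<and> F P = (a * P + b) / (c * P + d))"
    using affine_denominator_pos by (metis less_imp_le)
  moreover have "\<forall>m \<in> {1..M}. mono_on {0..}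
      (\<lambda>P. F (riccati_f A Q P) - F (riccati_g A Q (C m) (R m) P))"
    using mono_on_moebius_riccati_gap[OF F assms(1)] assms(2) by blast
  ultimately show ?thesis by blast
qed

end
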